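(* For every $n\ge 2$ there exist nonnegative numbers $\gamma_{n,i}$ such that $$\mathcal{A}_n^{(2)}(t):=\sum_{k=0}^{n-1}\mathcal{A}^{(2)}(n,k)\,t^k=\sum_{i=0}^{\lfloor (n-1)/2\rfloor}\gamma_{n,i}\,t^i(1+t)^{n-1-2i}.$$
   Context: A subexceedant function on $[n]$ is a map $f:[n]\to[n]$ with $1\le f(i)\le i$; its block leader set is $\mathrm{bl}(f)=\{i\in[n]: f(i)\notin f(\{1,\dots,i-1\})\}$. $\mathcal{A}^{(2)}(n,k)$ is the number of pairs $(f_1,f_2)$ of subexceedant functions on $[n]$ with $|\mathrm{bl}(f_1)|=k+1$ and $\mathrm{bl}(f_1)=\mathrm{bl}(f_2)$. *)

theory Defs
  imports Complex_Main
begin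

text \<open>Subexceedant functions on [n] = {1..n}, represented as functions nat => nat
  that vanish outside {1..n} (so that the set of them is finite).\<close>
definition subexc :: "nat \<Rightarrow> (nat \<Rightarrow> nat) set" where
  "subexc n = {f. (\<forall>i\<in>{1..n}. 1 \<le> f i \<and> f i \<le> i) \<and> (\<forall>i. i \<notin> {1..n} \<longrightarrow> f i = 0)}"

definition bl :: "nat \<Rightarrow> (nat \<Rightarrow> nat) \<Rightarrow> nat set" where
  "bl n f = {i \<in> {1..n}. f i \<notin> f ` {1..<i}}"

definition A2 :: "nat \<Rightarrow> nat \<Rightarrow> nat" where
  "A2 n k = card {(f1, f2). f1 \<in> subexc n \<and> f2 \<in> subexc n \<and>
                            card (bl n f1) = k + 1 \<and> bl n f1 = bl n f2}"

end

(*
  Deleting the point n + 1 from a pair (f1, f2) counted by A2(n + 1, k) leaves a pair on [n]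
  with equal block leader sets. Either n + 1 is a block leader of neither function (both values
  are old, (k + 1)^2 choices) or of both (both values are new, (n + 1 - k)^2 choices), so
    A2(n + 1, k) = (k + 1)^2 A2(n, k) + (n + 1 - k)^2 A2(n, k - 1).
  For the generating polynomial A_n this says A_(n+1) = (1 + E)^2 A_n + x (n - E)^2 A_n with the
  Euler operator E = x d/dx. With r = n - 1 - 2i this operator sends x^i (1 + x)^r to
    (i + 1)^2 x^i (1 + x)^(r + 1) + r (r + 4i + 5) x^(i + 1) (1 + x)^(r - 1),
  a nonnegative combination of the next gamma basis, so nonnegative gamma coefficients
  propagate by induction from A_1 = 1.
*)
theory Submission
  imports Defs "HOL-Computational_Algebra.Polynomial"
begin

definition bl_pairs :: "nat \<Rightarrow> nat \<Rightarrow> ((nat \<Rightarrow> nat) \<times> (nat \<Rightarrow> nat)) set" where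
  "bl_pairs n k = {(f1, f2). f1 \<in> subexc n \<and> f2 \<in> subexc n \<and> card (bl n f1) = k \<and> bl n f1 = bl n f2}"

lemma A2_eq_card_bl_pairs: "A2 n k = card (bl_pairs n (Suc k))"
  by (simp add: A2_def bl_pairs_def)

lemma image_subexc: "f \<in> subexc n \<Longrightarrow> f ` {1..n} \<subseteq> {1..n}"
  unfolding subexc_def by (auto intro: order_trans)

lemma finite_subexc: "finite (subexc n)"
proof (rule finite_subset)
  show "subexc n \<subseteq> {f. \<forall>i. (i \<in> {1..n} \<longrightarrow> f i \<in> {0..n}) \<and> (i \<notin> {1..n} \<longrightarrow> f i = 0)}"
    unfolding subexc_def by (auto intro: order_trans)
  show "finite \<dots>"
    by (rule finite_set_of_finite_funs) auto
qed

lemma finite_bl_pairs: "finite (bl_pairs n k)"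
  by (rule finite_subset[of _ "subexc n \<times> subexc n"]) (auto simp: bl_pairs_def finite_subexc)

lemma bl_subset: "bl n f \<subseteq> {1..n}"
  unfolding bl_def by auto

lemma finite_bl [simp]: "finite (bl n f)"
  using bl_subset finite_subset by blast

lemma image_bl: "f ` bl n f = f ` {1..n}"
proof
  show "f ` {1..n} \<subseteq> f ` bl n f"
  proof
    fix y assume "y \<in> f ` {1..n}"
    then have ex: "\<exists>i. i \<in> {1..n} \<and> f i = y" by auto
    define i where "i = (LEAST i. i \<in> {1..n} \<and> f i = y)"
    have i: "i \<in> {1..n}" "f i = y"
      using LeastI_ex[OF ex] by (simp_all add: i_def)
    have "i \<le> j" if "j \<in> {1..n}" "f j = y" for j
      unfolding i_def using that by (blast intro: Least_le)
    then have "f i \<notin> f ` {1..<i}"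
      using i by fastforce
    with i show "y \<in> f ` bl n f"
      unfolding bl_def by blast
  qed
qed (use bl_subset in auto)

lemma inj_on_bl: "inj_on f (bl n f)"
proof (rule inj_onI)
  have earlier: "f j \<noteq> f i" if "i \<in> bl n f" "j \<in> bl n f" "j < i" for i j
  proof -
    have "f j \<in> f ` {1..<i}"
      using that bl_subset by fastforce
    with \<open>i \<in> bl n f\<close> show ?thesis
      unfolding bl_def by auto
  qed
  fix i j assume "i \<in> bl n f" "j \<in> bl n f" "f i = f j"
  then show "i = j"
    using earlier[of i j] earlier[of j i] by (cases i j rule: linorder_cases) auto
qed

lemma card_bl: "card (bl n f) = card (f ` {1..n})"
  by (metis image_bl card_image inj_on_bl)

lemma bl_fun_upd_Suc:
  "bl (Suc n) (g(Suc n := v)) = (if v \<in> g ` {1..n} then bl n g else insert (Suc n) (bl n g))"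
proof -
  have img: "(g(Suc n := v)) ` {1..<i} = g ` {1..<i}" if "i \<le> Suc n" for i
    using that by (intro image_cong) auto
  have old: "i \<in> bl (Suc n) (g(Suc n := v)) \<longleftrightarrow> i \<in> bl n g" if "i \<noteq> Suc n" for i
    using img[of i] that unfolding bl_def by (cases "i \<le> n") auto
  have new: "Suc n \<in> bl (Suc n) (g(Suc n := v)) \<longleftrightarrow> v \<notin> g ` {1..n}"
    using img[of "Suc n"] unfolding bl_def by (simp add: atLeastLessThanSuc_atLeastAtMost Int_absorb2 subset_eq)
  have "Suc n \<notin> bl n g"
    using bl_subset by fastforce
  with old new show ?thesis
    by (intro set_eqI) (metis insert_iff)
qed

lemma bij_betw_subexc_Suc:
  "bij_betw (\<lambda>(g, v). g(Suc n := v)) (subexc n \<times> {1..Suc n}) (subexc (Suc n))"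
proof (rule bij_betw_byWitness[where f' = "\<lambda>f. (f(Suc n := 0), f (Suc n))"])
  show "\<forall>x\<in>subexc n \<times> {1..Suc n}. (\<lambda>f. (f(Suc n := 0), f (Suc n))) ((\<lambda>(g, v). g(Suc n := v)) x) = x"
    by (auto simp: subexc_def fun_eq_iff)
  show "\<forall>f\<in>subexc (Suc n). (\<lambda>(g, v). g(Suc n := v)) (f(Suc n := 0), f (Suc n)) = f"
    by simp
  show "(\<lambda>(g, v). g(Suc n := v)) ` (subexc n \<times> {1..Suc n}) \<subseteq> subexc (Suc n)"
    by (auto simp: subexc_def)
  show "(\<lambda>f. (f(Suc n := 0), f (Suc n))) ` subexc (Suc n) \<subseteq> subexc n \<times> {1..Suc n}"
    by (auto simp: subexc_def)
qed

lemma fun_upd_Suc_in_subexc_iff: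
  "g \<in> subexc n \<Longrightarrow> g(Suc n := v) \<in> subexc (Suc n) \<longleftrightarrow> v \<in> {1..Suc n}"
  unfolding subexc_def by auto

lemma fun_upd_Suc_in_bl_pairs_iff:
  assumes "g1 \<in> subexc n" "g2 \<in> subexc n"
  shows "(g1(Suc n := v1), g2(Suc n := v2)) \<in> bl_pairs (Suc n) (Suc k) \<longleftrightarrow>
     v1 \<in> {1..Suc n} \<and> v2 \<in> {1..Suc n} \<and>
     ((g1, g2) \<in> bl_pairs n (Suc k) \<and> v1 \<in> g1 ` {1..n} \<and> v2 \<in> g2 ` {1..n} \<or>
      (g1, g2) \<in> bl_pairs n k \<and> v1 \<notin> g1 ` {1..n} \<and> v2 \<notin> g2 ` {1..n})"
proof -
  have notin: "Suc n \<notin> bl n g" for g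
    using bl_subset by fastforce
  have "bl (Suc n) (g1(Suc n := v1)) = bl (Suc n) (g2(Suc n := v2)) \<and>
        card (bl (Suc n) (g1(Suc n := v1))) = Suc k \<longleftrightarrow>
      bl n g1 = bl n g2 \<and>
      (card (bl n g1) = Suc k \<and> v1 \<in> g1 ` {1..n} \<and> v2 \<in> g2 ` {1..n} \<or>
       card (bl n g1) = k \<and> v1 \<notin> g1 ` {1..n} \<and> v2 \<notin> g2 ` {1..n})"
    unfolding bl_fun_upd_Suc using notin[of g1] notin[of g2]
    by (cases "v1 \<in> g1 ` {1..n}"; cases "v2 \<in> g2 ` {1..n}") (auto simp: insert_ident)
  with assms show ?thesis
    unfolding bl_pairs_def by (auto simp: fun_upd_Suc_in_subexc_iff)
qed

definition extend_pair :: "nat \<Rightarrow> ((nat \<Rightarrow> nat) \<times> (nat \<Rightarrow> nat)) \<times> nat \<times> nat \<Rightarrow> (nat \<Rightarrow> nat) \<times> (nat \<Rightarrow> nat)" where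
  "extend_pair n = (\<lambda>((g1, g2), (v1, v2)). (g1(Suc n := v1), g2(Suc n := v2)))"

definition old_value_extensions :: "nat \<Rightarrow> nat \<Rightarrow> (((nat \<Rightarrow> nat) \<times> (nat \<Rightarrow> nat)) \<times> nat \<times> nat) set" where
  "old_value_extensions n k = Sigma (bl_pairs n k) (\<lambda>(g1, g2). g1 ` {1..n} \<times> g2 ` {1..n})"

definition new_value_extensions :: "nat \<Rightarrow> nat \<Rightarrow> (((nat \<Rightarrow> nat) \<times> (nat \<Rightarrow> nat)) \<times> nat \<times> nat) set" where
  "new_value_extensions n k =
     Sigma (bl_pairs n k) (\<lambda>(g1, g2). ({1..Suc n} - g1 ` {1..n}) \<times> ({1..Suc n} - g2 ` {1..n}))"

lemma value_extensions_subset: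
  "old_value_extensions n k \<union> new_value_extensions n k' \<subseteq> (subexc n \<times> subexc n) \<times> ({1..Suc n} \<times> {1..Suc n})"
  using image_subexc
  unfolding old_value_extensions_def new_value_extensions_def bl_pairs_def by fastforce

lemma inj_on_extend_pair: "inj_on (extend_pair n) ((subexc n \<times> subexc n) \<times> ({1..Suc n} \<times> {1..Suc n}))"
proof (rule inj_onI)
  have inj: "inj_on (\<lambda>(g, v). g(Suc n := v)) (subexc n \<times> {1..Suc n})"
    using bij_betw_subexc_Suc by (rule bij_betw_imp_inj_on)
  fix x y assume "x \<in> (subexc n \<times> subexc n) \<times> ({1..Suc n} \<times> {1..Suc n})"
    and "y \<in> (subexc n \<times> subexc n) \<times> ({1..Suc n} \<times> {1..Suc n})" and "extend_pair n x = extend_pair n y"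
  moreover obtain g1 g2 v1 v2 where "x = ((g1, g2), (v1, v2))"
    by (metis prod.collapse)
  moreover obtain h1 h2 w1 w2 where "y = ((h1, h2), (w1, w2))"
    by (metis prod.collapse)
  ultimately show "x = y"
    using inj_onD[OF inj, of "(g1, v1)" "(h1, w1)"] inj_onD[OF inj, of "(g2, v2)" "(h2, w2)"]
    by (auto simp: extend_pair_def)
qed

lemma bl_pairs_Suc_eq_image:
  "bl_pairs (Suc n) (Suc k) = extend_pair n ` (old_value_extensions n (Suc k) \<union> new_value_extensions n k)"
proof (intro equalityI subsetI)
  fix z assume z: "z \<in> bl_pairs (Suc n) (Suc k)"
  then obtain f1 f2 where f: "z = (f1, f2)" "f1 \<in> subexc (Suc n)" "f2 \<in> subexc (Suc n)"
    unfolding bl_pairs_def by auto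
  have "f1 \<in> (\<lambda>(g, v). g(Suc n := v)) ` (subexc n \<times> {1..Suc n})"
    and "f2 \<in> (\<lambda>(g, v). g(Suc n := v)) ` (subexc n \<times> {1..Suc n})"
    using f(2,3) bij_betw_imp_surj_on[OF bij_betw_subexc_Suc] by simp_all
  then obtain g1 v1 g2 v2 where g1: "g1 \<in> subexc n" "v1 \<in> {1..Suc n}" "f1 = g1(Suc n := v1)"
    and g2: "g2 \<in> subexc n" "v2 \<in> {1..Suc n}" "f2 = g2(Suc n := v2)"
    by auto
  have "((g1, g2), (v1, v2)) \<in> old_value_extensions n (Suc k) \<union> new_value_extensions n k"
    using z fun_upd_Suc_in_bl_pairs_iff[OF g1(1) g2(1)]
    unfolding f g1 g2 old_value_extensions_def new_value_extensions_def by auto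
  moreover have "z = extend_pair n ((g1, g2), (v1, v2))"
    unfolding f g1 g2 extend_pair_def by simp
  ultimately show "z \<in> extend_pair n ` (old_value_extensions n (Suc k) \<union> new_value_extensions n k)"
    by blast
next
  fix z assume "z \<in> extend_pair n ` (old_value_extensions n (Suc k) \<union> new_value_extensions n k)"
  then obtain g1 g2 v1 v2 where x: "((g1, g2), (v1, v2)) \<in> old_value_extensions n (Suc k) \<union> new_value_extensions n k"
      and z: "z = (g1(Suc n := v1), g2(Suc n := v2))"
    unfolding extend_pair_def by auto
  then have "g1 \<in> subexc n" "g2 \<in> subexc n" "v1 \<in> {1..Suc n}" "v2 \<in> {1..Suc n}"
    using value_extensions_subset by blast+
  with x show "z \<in> bl_pairs (Suc n) (Suc k)"
    unfolding z using fun_upd_Suc_in_bl_pairs_iff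
    unfolding old_value_extensions_def new_value_extensions_def by auto
qed

lemma card_Sigma_const:
  assumes "finite A" and "\<And>a. a \<in> A \<Longrightarrow> finite (B a) \<and> card (B a) = c"
  shows "card (Sigma A B) = c * card A"
  using assms by (simp add: card_SigmaI)

lemma card_old_value_extensions: "card (old_value_extensions n k) = k ^ 2 * card (bl_pairs n k)"
proof -
  have "card (g1 ` {1..n} \<times> g2 ` {1..n}) = k ^ 2" if "(g1, g2) \<in> bl_pairs n k" for g1 g2
    using that card_bl[of n g1] card_bl[of n g2]
    by (simp add: bl_pairs_def card_cartesian_product power2_eq_square)
  then show ?thesis
    unfolding old_value_extensions_def by (intro card_Sigma_const) (auto simp: finite_bl_pairs)
qed

lemma card_new_value_extensions: "card (new_value_extensions n k) = (Suc n - k) ^ 2 * card (bl_pairs n k)"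
proof -
  have "card ({1..Suc n} - g ` {1..n}) = Suc n - card (bl n g)" if "g \<in> subexc n" for g
    using image_subexc[OF that] by (subst card_Diff_subset) (auto simp: card_bl)
  then have "card (({1..Suc n} - g1 ` {1..n}) \<times> ({1..Suc n} - g2 ` {1..n})) = (Suc n - k) ^ 2"
    if "(g1, g2) \<in> bl_pairs n k" for g1 g2
    using that by (auto simp: bl_pairs_def card_cartesian_product power2_eq_square)
  then show ?thesis
    unfolding new_value_extensions_def by (intro card_Sigma_const) (auto simp: finite_bl_pairs)
qed

lemma card_bl_pairs_Suc:
  "card (bl_pairs (Suc n) (Suc k)) = (Suc k) ^ 2 * card (bl_pairs n (Suc k)) + (Suc n - k) ^ 2 * card (bl_pairs n k)"
proof -
  let ?old = "old_value_extensions n (Suc k)" and ?new = "new_value_extensions n k"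
  have "finite (?old \<union> ?new)"
    by (rule finite_subset[OF value_extensions_subset]) (simp add: finite_subexc)
  moreover have "?old \<inter> ?new = {}"
    unfolding old_value_extensions_def new_value_extensions_def by auto
  moreover have "inj_on (extend_pair n) (?old \<union> ?new)"
    using inj_on_extend_pair value_extensions_subset by (rule inj_on_subset)
  ultimately have "card (bl_pairs (Suc n) (Suc k)) = card ?old + card ?new"
    unfolding bl_pairs_Suc_eq_image by (simp add: card_image card_Un_disjoint)
  then show ?thesis
    by (simp add: card_old_value_extensions card_new_value_extensions)
qed

lemma bl_pairs_no_leaders: "1 \<le> n \<Longrightarrow> bl_pairs n 0 = {}"
proof -
  assume "1 \<le> n"
  then have "1 \<in> bl n f" for f
    unfolding bl_def by auto
  then have "card (bl n f) \<noteq> 0" for f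
    by (metis card_0_eq empty_iff finite_bl)
  then show ?thesis
    unfolding bl_pairs_def by auto
qed

lemma bl_pairs_too_many_leaders: "n < k \<Longrightarrow> bl_pairs n k = {}"
proof -
  assume "n < k"
  then have "card (bl n f) \<noteq> k" for f
    using card_mono[OF _ bl_subset, of n f] by simp
  then show ?thesis
    unfolding bl_pairs_def by auto
qed

lemma card_bl_pairs_empty_domain: "card (bl_pairs 0 k) = (if k = 0 then 1 else 0)"
proof -
  have "subexc 0 = {\<lambda>_. 0}"
    unfolding subexc_def by auto
  moreover have "bl 0 f = {}" for f
    unfolding bl_def by auto
  ultimately show ?thesis
    unfolding bl_pairs_def by auto
qed

lemma A2_eq_0: "n \<le> k \<Longrightarrow> A2 n k = 0"
  by (simp add: A2_eq_card_bl_pairs bl_pairs_too_many_leaders)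

lemma A2_Suc:
  "1 \<le> n \<Longrightarrow> A2 (Suc n) k = (Suc k) ^ 2 * A2 n k + (if k = 0 then 0 else (Suc n - k) ^ 2 * A2 n (k - 1))"
  using card_bl_pairs_Suc[of n k] by (cases k) (auto simp: A2_eq_card_bl_pairs bl_pairs_no_leaders)

lemma A2_1: "A2 1 k = (if k = 0 then 1 else 0)"
  using card_bl_pairs_Suc[of 0 k] by (simp add: A2_eq_card_bl_pairs card_bl_pairs_empty_domain)

definition euler :: "'a::idom poly \<Rightarrow> 'a poly" where
  "euler p = [:0, 1:] * pderiv p"

lemma euler_add: "euler (p + q) = euler p + euler q"
  by (simp add: euler_def pderiv_add algebra_simps)

lemma euler_mult: "euler (p * q) = euler p * q + p * euler q"
  by (simp add: euler_def pderiv_mult algebra_simps)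

lemma euler_of_nat [simp]: "euler (of_nat c) = 0"
  by (simp add: euler_def)

lemma coeff_euler: "coeff (euler p) j = of_nat j * coeff p j"
  by (cases j) (simp_all add: euler_def coeff_pderiv)

lemma euler_x_power: "euler ([:0, 1:] ^ a) = of_nat a * [:0, 1:] ^ a"
proof (induction a)
  case (Suc a)
  have "euler [:0, 1:] = [:0, 1::'a:]"
    by (simp add: euler_def pderiv_pCons)
  with Suc show ?case
    by (simp only: power_Suc euler_mult) (simp add: algebra_simps)
qed (simp add: euler_def)

lemma euler_one_plus_x_power:
  "[:1, 1:] * euler ([:1, 1:] ^ c) = of_nat c * [:0, 1:] * [:1, 1::'a::idom:] ^ c"
proof (induction c)
  case (Suc c)
  have "euler [:1, 1:] = [:0, 1::'a:]"
    by (simp add: euler_def pderiv_pCons)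
  with Suc show ?case
    by (simp only: power_Suc euler_mult) (simp add: algebra_simps)
qed (simp add: euler_def)

lemma euler_basis:
  "[:1, 1:] * euler ([:0, 1:] ^ a * [:1, 1:] ^ c) =
     (of_nat a * [:1, 1:] + of_nat c * [:0, 1:]) * ([:0, 1:] ^ a * [:1, 1::'a::idom:] ^ c)"
proof -
  have "[:1, 1:] * euler ([:0, 1:] ^ a * [:1, 1:] ^ c) =
      of_nat a * [:1, 1:] * ([:0, 1:] ^ a * [:1, 1:] ^ c) + [:0, 1:] ^ a * ([:1, 1:] * euler ([:1, 1::'a:] ^ c))"
    by (simp only: euler_mult euler_x_power) (simp add: algebra_simps)
  then show ?thesis
    by (simp only: euler_one_plus_x_power) (simp add: algebra_simps)
qed

definition A2_step :: "nat \<Rightarrow> 'a::idom poly \<Rightarrow> 'a poly" where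
  "A2_step n p = p + 2 * euler p + euler (euler p)
     + [:0, 1:] * (of_nat n ^ 2 * p - 2 * of_nat n * euler p + euler (euler p))"

text \<open>The Euler operator introduces a factor \<open>Y\<^sup>-\<^sup>1\<close>; the computation is done after
  multiplying by \<open>Y\<^sup>2\<close>, which is cancelled at the end since \<open>'a poly\<close> has no zero divisors.\<close>

lemma A2_step_basis:
  fixes a c :: nat
  defines "X \<equiv> [:0, 1:] :: 'a::idom poly" and "Y \<equiv> [:1, 1:] :: 'a poly"
  shows "A2_step (2 * a + c + 1) (X ^ a * Y ^ c) =
    of_nat ((a + 1) ^ 2) * (X ^ a * Y ^ (c + 1)) + of_nat (c * (c + 4 * a + 5)) * (X ^ (a + 1) * Y ^ (c - 1))"
proof -
  define b where "b = X ^ a * Y ^ c"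
  define A C :: "'a poly" where "A = of_nat a" and "C = of_nat c"
  have Y: "Y = 1 + X"
    by (simp add: X_def Y_def one_pCons)
  have euler_X: "euler X = X" and euler_Y: "euler Y = X"
    by (simp_all add: X_def Y_def euler_def pderiv_pCons)
  have E1: "Y * euler b = (A * Y + C * X) * b"
    unfolding b_def A_def C_def X_def Y_def by (rule euler_basis)
  have "Y * (X * euler b + Y * euler (euler b)) = Y * euler (Y * euler b)"
    by (simp add: euler_mult euler_Y)
  also have "\<dots> = Y * ((A + C) * X * b + (A * Y + C * X) * euler b)"
    unfolding E1 A_def C_def by (simp add: euler_mult euler_add euler_X euler_Y algebra_simps)
  finally have E2: "Y ^ 2 * euler (euler b) = ((A + C) * X * Y + (A * Y + C * X - X) * (A * Y + C * X)) * b"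
    by (simp add: power2_eq_square algebra_simps E1)
  have tail: "Y * (C * (X ^ (a + 1) * Y ^ (c - 1))) = C * X * b"
    unfolding b_def C_def by (cases c) (simp_all add: algebra_simps)
  have "Y ^ 2 * A2_step (2 * a + c + 1) b = Y ^ 2 * b + 2 * Y * (Y * euler b) + Y ^ 2 * euler (euler b)
     + X * ((2 * A + C + 1) ^ 2 * Y ^ 2 * b - 2 * (2 * A + C + 1) * Y * (Y * euler b) + Y ^ 2 * euler (euler b))"
    unfolding A2_step_def X_def[symmetric] A_def C_def by (simp add: algebra_simps power2_eq_square)
  also have "\<dots> = Y * ((A + 1) ^ 2 * Y ^ 2 + C * (C + 4 * A + 5) * X) * b"
    by (simp only: E1 E2) (simp add: Y algebra_simps power2_eq_square)
  also have "\<dots> = Y * ((A + 1) ^ 2 * Y ^ 2 * b + (C + 4 * A + 5) * (Y * (C * (X ^ (a + 1) * Y ^ (c - 1)))))"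
    by (simp only: tail) (simp add: algebra_simps power2_eq_square)
  also have "\<dots> = Y ^ 2 * (of_nat ((a + 1) ^ 2) * (X ^ a * Y ^ (c + 1)) + of_nat (c * (c + 4 * a + 5)) * (X ^ (a + 1) * Y ^ (c - 1)))"
    unfolding b_def A_def C_def by (simp add: algebra_simps power2_eq_square)
  finally show ?thesis
    unfolding b_def by (simp add: Y_def)
qed

lemma A2_step_add: "A2_step n (p + q) = A2_step n p + A2_step n q"
  unfolding A2_step_def by (simp add: euler_add algebra_simps)

lemma A2_step_of_nat_mult: "A2_step n (of_nat c * p) = of_nat c * A2_step n p"
  unfolding A2_step_def by (simp add: euler_mult algebra_simps)

lemma A2_step_sum: "A2_step n (\<Sum>i\<in>I. of_nat (g i) * p i) = (\<Sum>i\<in>I. of_nat (g i) * A2_step n (p i))"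
proof (induction I rule: infinite_finite_induct)
  case (insert i I)
  then show ?case
    by (simp add: A2_step_add A2_step_of_nat_mult)
qed (simp_all add: A2_step_def euler_def)

lemma coeff_A2_step:
  "coeff (A2_step n p) j = (of_nat j + 1) ^ 2 * coeff p j
     + (if j = 0 then 0 else (of_nat n - of_nat (j - 1)) ^ 2 * coeff p (j - 1))"
  by (cases j) (simp_all add: A2_step_def coeff_euler of_nat_poly numeral_poly algebra_simps power2_eq_square)

definition A2_poly :: "nat \<Rightarrow> real poly" where
  "A2_poly n = (\<Sum>k<n. monom (real (A2 n k)) k)"

lemma coeff_A2_poly: "coeff (A2_poly n) j = real (A2 n j)"
  unfolding A2_poly_def coeff_sum by (cases "j < n") (auto simp: A2_eq_0)

lemma poly_A2_poly: "poly (A2_poly n) t = (\<Sum>k<n. real (A2 n k) * t ^ k)"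
  by (simp add: A2_poly_def poly_sum poly_monom)

lemma A2_poly_Suc: "1 \<le> n \<Longrightarrow> A2_poly (Suc n) = A2_step n (A2_poly n)"
proof (rule poly_eqI)
  fix j assume "1 \<le> n"
  have "real ((Suc n - k) ^ 2 * A2 n (k - 1)) = (real n - real (k - 1)) ^ 2 * real (A2 n (k - 1))" if "k \<noteq> 0" for k
    using that by (cases "k \<le> Suc n") (auto simp: of_nat_diff A2_eq_0)
  with \<open>1 \<le> n\<close> show "coeff (A2_poly (Suc n)) j = coeff (A2_step n (A2_poly n)) j"
    unfolding coeff_A2_step coeff_A2_poly A2_Suc[OF \<open>1 \<le> n\<close>] by (simp add: algebra_simps)
qed

definition gamma_basis :: "nat \<Rightarrow> nat \<Rightarrow> 'a::comm_ring_1 poly" where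
  "gamma_basis m i = [:0, 1:] ^ i * [:1, 1:] ^ (m - 2 * i)"

lemma poly_gamma_basis: "poly (gamma_basis m i) t = t ^ i * (1 + t) ^ (m - 2 * i)"
  by (simp add: gamma_basis_def poly_power)

lemma A2_step_gamma_basis:
  assumes "2 * i \<le> m"
  shows "A2_step (Suc m) (gamma_basis m i :: 'a::idom poly) =
    of_nat ((i + 1) ^ 2) * gamma_basis (Suc m) i + of_nat ((m - 2 * i) * (m + 2 * i + 5)) * gamma_basis (Suc m) (Suc i)"
proof -
  obtain c where m: "m = 2 * i + c"
    using le_Suc_ex[OF assms] by blast
  have "(gamma_basis m i :: 'a poly) = [:0, 1:] ^ i * [:1, 1:] ^ c"
    and "(gamma_basis (Suc m) i :: 'a poly) = [:0, 1:] ^ i * [:1, 1:] ^ (c + 1)"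
    and "(gamma_basis (Suc m) (Suc i) :: 'a poly) = [:0, 1:] ^ (i + 1) * [:1, 1:] ^ (c - 1)"
    and "(m - 2 * i) * (m + 2 * i + 5) = c * (c + 4 * i + 5)"
    by (simp_all add: gamma_basis_def m algebra_simps)
  note basis = this
  have "Suc m = 2 * i + c + 1"
    by (simp add: m)
  then show ?thesis
    unfolding basis using A2_step_basis[of i c] by (simp only:)
qed

fun A2_gamma :: "nat \<Rightarrow> nat \<Rightarrow> nat" where
  "A2_gamma 0 i = (if i = 0 then 1 else 0)"
| "A2_gamma (Suc m) 0 = A2_gamma m 0"
| "A2_gamma (Suc m) (Suc i) = (i + 2) ^ 2 * A2_gamma m (Suc i) + (m - 2 * i) * (m + 2 * i + 5) * A2_gamma m i"

lemma A2_gamma_eq_0: "m < 2 * i \<Longrightarrow> A2_gamma m i = 0"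
proof (induction m arbitrary: i)
  case (Suc m)
  then obtain i' where i: "i = Suc i'"
    by (cases i) auto
  with Suc show ?case
    by (cases "m < 2 * i'") auto
qed simp

lemma A2_poly_gamma_expansion:
  "A2_poly (Suc m) = (\<Sum>i\<le>m. of_nat (A2_gamma m i) * gamma_basis m i)"
proof (induction m)
  case 0
  show ?case
    using A2_1[of 0] by (simp add: A2_poly_def gamma_basis_def)
next
  case (Suc m)
  have step: "of_nat (A2_gamma m i) * A2_step (Suc m) (gamma_basis m i) =
      of_nat ((i + 1) ^ 2 * A2_gamma m i) * gamma_basis (Suc m) i
      + of_nat ((m - 2 * i) * (m + 2 * i + 5) * A2_gamma m i) * gamma_basis (Suc m) (Suc i)" for i
  proof (cases "2 * i \<le> m")
    case True
    then show ?thesis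
      by (simp add: A2_step_gamma_basis distrib_left ac_simps)
  qed (simp add: A2_gamma_eq_0)
  have "A2_poly (Suc (Suc m)) = A2_step (Suc m) (A2_poly (Suc m))"
    by (simp add: A2_poly_Suc)
  also have "\<dots> = (\<Sum>i\<le>m. of_nat ((i + 1) ^ 2 * A2_gamma m i) * gamma_basis (Suc m) i)
      + (\<Sum>i\<le>m. of_nat ((m - 2 * i) * (m + 2 * i + 5) * A2_gamma m i) * gamma_basis (Suc m) (Suc i))"
    by (simp add: Suc.IH A2_step_sum step sum.distrib)
  also have "(\<Sum>i\<le>m. of_nat ((i + 1) ^ 2 * A2_gamma m i) * gamma_basis (Suc m) i)
      = (\<Sum>i\<le>Suc m. of_nat ((i + 1) ^ 2 * A2_gamma m i) * gamma_basis (Suc m) i)"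
    using A2_gamma_eq_0[of m "Suc m"] by simp
  also have "\<dots> = of_nat (A2_gamma m 0) * gamma_basis (Suc m) 0
        + (\<Sum>i\<le>m. of_nat ((i + 2) ^ 2 * A2_gamma m (Suc i)) * gamma_basis (Suc m) (Suc i))"
    by (subst sum.atMost_Suc_shift) simp
  finally show ?case
    by (simp add: sum.atMost_Suc_shift sum.distrib[symmetric] algebra_simps del: sum.atMost_Suc)
qed

theorem mainTheorem16:
  fixes n :: nat
  assumes "n \<ge> 2"
  shows "\<exists>\<gamma> :: nat \<Rightarrow> real.
           (\<forall>i \<le> (n - 1) div 2. \<gamma> i \<ge> 0) \<and>
           (\<forall>t :: real. (\<Sum>k = 0..n - 1. real (A2 n k) * t ^ k) =
              (\<Sum>i = 0..(n - 1) div 2. \<gamma> i * t ^ i * (1 + t) ^ (n - 1 - 2 * i)))"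
proof -
  obtain m where n: "n = Suc m"
    using assms by (cases n) auto
  have "(\<Sum>k = 0..n - 1. real (A2 n k) * t ^ k) =
      (\<Sum>i = 0..m div 2. real (A2_gamma m i) * t ^ i * (1 + t) ^ (m - 2 * i))" for t :: real
  proof -
    have "(\<Sum>k = 0..n - 1. real (A2 n k) * t ^ k) = poly (A2_poly n) t"
      by (simp add: poly_A2_poly n atLeast0AtMost lessThan_Suc_atMost)
    also have "\<dots> = (\<Sum>i\<le>m. real (A2_gamma m i) * t ^ i * (1 + t) ^ (m - 2 * i))"
      by (simp add: n A2_poly_gamma_expansion poly_sum poly_gamma_basis mult.assoc)
    also have "\<dots> = (\<Sum>i = 0..m div 2. real (A2_gamma m i) * t ^ i * (1 + t) ^ (m - 2 * i))"
      by (rule sum.mono_neutral_right) (auto simp: A2_gamma_eq_0)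
    finally show ?thesis .
  qed
  then show ?thesis
    unfolding n by (intro exI[of _ "\<lambda>i. real (A2_gamma m i)"]) simp
qed

end
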